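(* Let $\mathcal{X} \subseteq \mathbb{R}^d$ and $\mathcal{Y} = \{1,\dots,c\}$. Let $\hat{p}^r(\bm{x},\hat{y})$ be a (real) joint distribution of data and clean labels, and let the observed noisy labels arise by class-dependent corruption independent of $\bm{x}$: with transition matrix $T=(T_{i,j}) \in [0,1]^{c\times c}$, $T_{i,j} = p(\tilde{y}=j \mid \hat{y}=i)$, the real noisy joint distribution is $\tilde{p}^r(\bm{x},\tilde{y}) = \sum_{\hat{y}} T_{\hat{y},\tilde{y}}\, \hat{p}^r(\bm{x},\hat{y})$. Let $G$ be a conditional generator mapping $(\bm{z},\hat{y}^g)$, with $\bm{z}\sim p(\bm{z})$ and $\hat{y}^g \sim p(\hat{y})$, to $G(\bm{z},\hat{y}^g)$; let $\hat{p}^g(\bm{x},\hat{y})$ be the joint distribution of $(G(\bm{z},\hat{y}^g),\hat{y}^g)$, and let $\tilde{p}^g(\bm{x},\tilde{y}) = \sum_{\hat{y}} T_{\hat{y},\tilde{y}}\, \hat{p}^g(\bm{x},\hat{y})$ be the joint distribution of $(G(\bm{z},\hat{y}^g),\tilde{y}^g)$ where $\tilde{y}^g \sim p(\tilde{y}\mid \hat{y}^g)$. Consider the objective $$\mathcal{L}_{\mathrm{rcGAN}}(G,D) = \mathbb{E}_{(\bm{x}^r,\tilde{y}^r)\sim \tilde{p}^r}[\log D(\bm{x}^r,\tilde{y}^r)] + \mathbb{E}_{\bm{z}\sim p(\bm{z}),\,\hat{y}^g\sim p(\hat{y}),\,\tilde{y}^g\sim p(\tilde{y}\mid\hat{y}^g)}[\log(1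 - D(G(\bm{z},\hat{y}^g),\tilde{y}^g))],$$ where the discriminator $D:\mathcal{X}\times\mathcal{Y}\to(0,1)$ maximizes and the generator $G$ minimizes, and call $G$ optimal if it attains the global minimum over generators of $\max_D \mathcal{L}_{\mathrm{rcGAN}}(G,D)$. If $T$ is nonsingular, then $G$ is optimal if and only if $\hat{p}^g(\bm{x},\hat{y}) = \hat{p}^r(\bm{x},\hat{y})$.
   Context: This is the setting of a label-noise robust conditional GAN (rcGAN): only noisy labels $\tilde{y}$ are observed for real data, the clean label $\hat{y}$ is unobserved, and the generator is conditioned on a clean label $\hat{y}^g$ which is passed through the known noise transition model $p(\tilde{y}\mid\hat{y})$ before being given to the discriminator. Optimality is understood in the sense of the original GAN analysis (optimal discriminator for fixed generator, then minimization over generators). *)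

theory Defs
  imports "HOL-Analysis.Analysis" "HOL-Probability.Probability"
begin

(* Data space X \<subseteq> R^d (as a measurable subspace of Borel R^d), label space Y = the
   finite type 'c (so c = CARD('c)).  Joint distributions live on X \<times> Y. *)
definition joint_space :: "(real^'d) set \<Rightarrow> ((real^'d) \<times> 'c) measure" where
  "joint_space X = restrict_space borel X \<Otimes>\<^sub>M count_space UNIV"

definition joint_dists :: "(real^'d) set \<Rightarrow> ((real^'d) \<times> 'c) measure set" where
  "joint_dists X = {Q. prob_space Q \<and> sets Q = sets (joint_space X)}"

definition discs :: "(real^'d) set \<Rightarrow> ((real^'d) \<times> 'c \<Rightarrow> real) set" where
  "discs X = {D. D \<in> borel_measurable (joint_space X) \<and>
                 (\<forall>w\<in>space (joint_space X). 0 < D w \<and> D w < 1)}"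

(* E_{(x,\<tilde>y) ~ \<tilde>p^r}[log D(x,\<tilde>y)], where \<tilde>p^r(x,\<tilde>y) = \<Sum>_\<hat>y T_{\<hat>y,\<tilde>y} \<hat>p^r(x,\<hat>y).
   The integrand is nonpositive, so the expectation is taken in [-\<infinity>,0]. *)
definition real_term :: "real^'c^'c \<Rightarrow> ((real^'d) \<times> 'c) measure \<Rightarrow> ((real^'d) \<times> 'c \<Rightarrow> real) \<Rightarrow> ereal" where
  "real_term T P D =
     - enn2ereal (\<integral>\<^sup>+ w. ennreal (- (\<Sum>j\<in>UNIV. T $ snd w $ j * ln (D (fst w, j)))) \<partial>P)"

definition fake_term_gen :: "real^'c^'c \<Rightarrow> 'z measure \<Rightarrow> 'c pmf \<Rightarrow> ('z \<Rightarrow> 'c \<Rightarrow> real^'d)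
     \<Rightarrow> ((real^'d) \<times> 'c \<Rightarrow> real) \<Rightarrow> ereal" where
  "fake_term_gen T Z py G D =
     - enn2ereal (\<integral>\<^sup>+ u. ennreal (- (\<Sum>j\<in>UNIV. T $ snd u $ j * ln (1 - D (G (fst u) (snd u), j))))
                    \<partial>(Z \<Otimes>\<^sub>M measure_pmf py))"

definition L_rcGAN :: "real^'c^'c \<Rightarrow> ((real^'d) \<times> 'c) measure \<Rightarrow> 'z measure \<Rightarrow> 'c pmf
     \<Rightarrow> ('z \<Rightarrow> 'c \<Rightarrow> real^'d) \<Rightarrow> ((real^'d) \<times> 'c \<Rightarrow> real) \<Rightarrow> ereal" where
  "L_rcGAN T P Z py G D = real_term T P D + fake_term_gen T Z py G D"

(* same objective, with the generated clean joint distribution \<hat>p^g given directly as Q *)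
definition fake_term_dist :: "real^'c^'c \<Rightarrow> ((real^'d) \<times> 'c) measure \<Rightarrow> ((real^'d) \<times> 'c \<Rightarrow> real) \<Rightarrow> ereal" where
  "fake_term_dist T Q D =
     - enn2ereal (\<integral>\<^sup>+ w. ennreal (- (\<Sum>j\<in>UNIV. T $ snd w $ j * ln (1 - D (fst w, j)))) \<partial>Q)"

definition L_dist :: "real^'c^'c \<Rightarrow> ((real^'d) \<times> 'c) measure \<Rightarrow> ((real^'d) \<times> 'c) measure
     \<Rightarrow> ((real^'d) \<times> 'c \<Rightarrow> real) \<Rightarrow> ereal" where
  "L_dist T P Q D = real_term T P D + fake_term_dist T Q D"

definition gen_dist :: "(real^'d) set \<Rightarrow> 'z measure \<Rightarrow> 'c pmf \<Rightarrow> ('z \<Rightarrow> 'c \<Rightarrow> real^'d)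
     \<Rightarrow> ((real^'d) \<times> 'c) measure" where
  "gen_dist X Z py G = distr (Z \<Otimes>\<^sub>M measure_pmf py) (joint_space X) (\<lambda>(z, y). (G z y, y))"

definition gen_value where
  "gen_value X T P Z py G = (SUP D\<in>discs X. L_rcGAN T P Z py G D)"

definition dist_value where
  "dist_value X T P Q = (SUP D\<in>discs X. L_dist T P Q D)"

(* G attains the global minimum of max_D L_rcGAN, the minimum being taken (as in the
   nonparametric GAN analysis) over all generated joint distributions on X \<times> Y. *)
definition rcgan_optimal where
  "rcgan_optimal X T P Z py G \<longleftrightarrow> (\<forall>Q\<in>joint_dists X. gen_value X T P Z py G \<le> dist_value X T P Q)"

end

theory Submission
  imports Defs
begin

text \<open>For a fixed generated clean distribution \<open>Q\<close>, the constant discriminator \<open>1/2\<close> shows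
  \<open>max\<^sub>D L(Q, D) \<ge> -2 ln 2\<close>, and for \<open>Q = P\<close> equality holds because
  \<open>ln d + ln (1 - d) \<le> -2 ln 2\<close> pointwise. If \<open>Q \<noteq> P\<close>, the two differ on some rectangle
  \<open>B \<times> {y}\<close>; since \<open>T\<close> is nonsingular, the induced noisy distributions then differ on some
  \<open>B \<times> {j}\<close>, and the discriminator equal to \<open>(1 + s)/2\<close> on \<open>B \<times> {j}\<close> and \<open>1/2\<close> elsewhere
  lifts the objective strictly above \<open>-2 ln 2\<close> for a suitable \<open>s\<close>. So \<open>P\<close> is the unique
  minimiser, and a generator's value is that of the clean distribution it pushes forward.\<close>

definition stochastic_matrix :: "real^'c^'c \<Rightarrow> bool" where
  "stochastic_matrix T \<longleftrightarrow>
     (\<forall>i j. 0 \<le> T $ i $ j \<and> T $ i $ j \<le> 1) \<and> (\<forall>i. (\<Sum>j\<in>UNIV. T $ i $ j) = 1)"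

definition noisy_mass :: "real^'c^'c \<Rightarrow> ((real^'d) \<times> 'c) measure \<Rightarrow> (real^'d) set \<Rightarrow> 'c \<Rightarrow> real" where
  "noisy_mass T M B j = (\<Sum>y\<in>UNIV. T $ y $ j * measure M (B \<times> {y}))"

definition tilt_disc :: "(real^'d) set \<Rightarrow> 'c \<Rightarrow> real \<Rightarrow> (real^'d) \<times> 'c \<Rightarrow> real" where
  "tilt_disc B j s w = (1 + s * indicator (B \<times> {j}) w) / 2"

lemma vector_matrix_mult_cancel:
  fixes T :: "'a::comm_ring_1^'n^'n"
  assumes "invertible T" "v v* T = w v* T"
  shows "v = w"
proof -
  obtain T' where T': "T ** T' = mat 1" using assms(1) unfolding invertible_def by blast
  have "v = (v v* T) v* T'" by (simp add: vector_matrix_mul_assoc T')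
  also have "\<dots> = (w v* T) v* T'" using assms(2) by simp
  also have "\<dots> = w" by (simp add: vector_matrix_mul_assoc T')
  finally show ?thesis .
qed

lemma ln_add_ln_one_minus_le:
  fixes d :: real
  assumes "0 < d" "d < 1"
  shows "ln d + ln (1 - d) \<le> - (2 * ln 2)"
proof -
  have "d * (1 - d) \<le> 1 / 4"
    using zero_le_power2[of "d - 1/2"] by (simp add: power2_eq_square algebra_simps)
  then have "ln (d * (1 - d)) \<le> ln (1 / 4)"
    using assms by (intro ln_mono) auto
  moreover have "ln (1 / 4 :: real) = - (2 * ln 2)"
    using ln_mult[of 2 2] by (simp add: ln_div)
  ultimately show ?thesis
    using assms by (simp add: ln_mult)
qed

lemma exists_ln_one_plus_one_minus_pos:
  fixes p q :: real
  assumes "0 \<le> p" "0 \<le> q" "p \<noteq> q"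
  shows "\<exists>s. -1 < s \<and> s < 1 \<and> 0 < ln (1 + s) * p + ln (1 - s) * q"
proof -
  text \<open>For \<open>q < p\<close> take \<open>s = (p - q) / (2 (p + q))\<close>: the bounds \<open>ln (1 + s) \<ge> s / (1 + s)\<close> and
    \<open>ln (1 - s) \<ge> -s / (1 - s)\<close> leave \<open>s (p - q) / (2 (1 - s\<^sup>2)) > 0\<close>.\<close>
  have gt: "\<exists>s. -1 < s \<and> s < 1 \<and> 0 < ln (1 + s) * p + ln (1 - s) * q"
    if "0 \<le> q" "q < p" for p q :: real
  proof -
    define s where "s = (p - q) / (2 * (p + q))"
    have s: "0 < s" "s \<le> 1/2"
      unfolding s_def using that by (auto simp: field_simps)
    have "ln (1 / (1 + s)) \<le> 1 / (1 + s) - 1" "ln (1 / (1 - s)) \<le> 1 / (1 - s) - 1"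
      using s by (intro ln_le_minus_one; simp)+
    then have "s / (1 + s) \<le> ln (1 + s)" "- s / (1 - s) \<le> ln (1 - s)"
      using s by (simp_all add: ln_div field_simps)
    then have "s / (1 + s) * p + (- s / (1 - s)) * q \<le> ln (1 + s) * p + ln (1 - s) * q"
      using that by (intro add_mono mult_right_mono) auto
    moreover have "s / (1 + s) * p + (- s / (1 - s)) * q = s * ((p - q) - s * (p + q)) / ((1 + s) * (1 - s))"
      using s by (simp add: field_simps)
    moreover have "(p - q) - s * (p + q) = (p - q) / 2"
      using that by (simp add: s_def field_simps)
    moreover have "0 < s * ((p - q) / 2) / ((1 + s) * (1 - s))"
      using s that by simp
    ultimately show ?thesis
      using s by (intro exI[of _ s]) auto
  qed
  show ?thesis
  proof (cases "q < p")
    case True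
    then show ?thesis using gt assms by blast
  next
    case False
    then obtain s where "-1 < s" "s < 1" "0 < ln (1 + s) * q + ln (1 - s) * p"
      using gt[of p q] assms by fastforce
    then show ?thesis by (intro exI[of _ "- s"]) auto
  qed
qed

lemma noisy_integrand_measurable:
  fixes T :: "real^'c^'c"
  assumes "D \<in> borel_measurable (joint_space X)" "sets M = sets (joint_space X)"
    and "f \<in> borel_measurable borel"
  shows "(\<lambda>w. ennreal (- (\<Sum>j\<in>UNIV. T $ snd w $ j * f (D (fst w, j))))) \<in> borel_measurable M"
  using assms unfolding joint_space_def measurable_cong_sets[OF assms(2) refl] by measurable

lemma space_joint_space: "space (joint_space X) = X \<times> UNIV"
  by (simp add: joint_space_def space_pair_measure space_restrict_space)

lemma rectangle_in_joint_space:
  assumes "B \<in> sets (restrict_space borel X)"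
  shows "B \<times> {y} \<in> sets (joint_space X)"
  using assms unfolding joint_space_def by (intro pair_measureI) auto

lemma emeasure_joint_rectangle:
  fixes M :: "((real^'d) \<times> 'c::finite) measure"
  assumes "finite_measure M" "sets M = sets (joint_space X)"
    and "A \<in> sets (restrict_space borel X)"
  shows "emeasure M (A \<times> C) = (\<Sum>y\<in>C. ennreal (measure M (A \<times> {y})))"
proof -
  have "(\<Sum>y\<in>C. emeasure M (A \<times> {y})) = emeasure M (\<Union>y\<in>C. A \<times> {y})"
    using rectangle_in_joint_space[OF assms(3)] assms(2)
    by (intro sum_emeasure) (auto simp: disjoint_family_on_def)
  also have "(\<Union>y\<in>C. A \<times> {y}) = A \<times> C" by auto
  finally show ?thesis
    by (simp add: finite_measure.emeasure_eq_measure[OF assms(1)])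
qed

lemma joint_measure_eqI:
  fixes P Q :: "((real^'d) \<times> 'c::finite) measure"
  assumes P: "finite_measure P" "sets P = sets (joint_space X)"
    and Q: "finite_measure Q" "sets Q = sets (joint_space X)"
    and eq: "\<And>B y. B \<in> sets (restrict_space borel X) \<Longrightarrow> measure P (B \<times> {y}) = measure Q (B \<times> {y})"
  shows "P = Q"
proof -
  let ?\<Omega> = "space (restrict_space borel X) \<times> space (count_space (UNIV :: 'c set))"
  let ?E = "{A \<times> C | A C. A \<in> sets (restrict_space borel X) \<and> C \<in> sets (count_space UNIV)}"
  show ?thesis
  proof (rule measure_eqI_generator_eq[where E = ?E and \<Omega> = ?\<Omega> and A = "\<lambda>_. ?\<Omega>"])
    show "Int_stable ?E" by (rule Int_stable_pair_measure_generator)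
    show "?E \<subseteq> Pow ?\<Omega>" by (rule pair_measure_closed)
    show "emeasure P Y = emeasure Q Y" if "Y \<in> ?E" for Y
      using that emeasure_joint_rectangle[OF P] emeasure_joint_rectangle[OF Q] eq by auto
    show "sets P = sigma_sets ?\<Omega> ?E" "sets Q = sigma_sets ?\<Omega> ?E"
      using P(2) Q(2) unfolding joint_space_def by (simp_all add: sets_pair_measure)
    show "range (\<lambda>_. ?\<Omega>) \<subseteq> ?E" "(\<Union>i. ?\<Omega>) = ?\<Omega>" by auto
    show "emeasure P ?\<Omega> \<noteq> \<infinity>"
      by (simp add: finite_measure.emeasure_eq_measure[OF P(1)])
  qed
qed

lemma noisy_mass_separates:
  fixes T :: "real^'c^'c"
  assumes "P \<in> joint_dists X" "Q \<in> joint_dists X" "invertible T" "P \<noteq> Q"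
  obtains B j where "B \<in> sets (restrict_space borel X)" "noisy_mass T P B j \<noteq> noisy_mass T Q B j"
proof -
  have "finite_measure P" "finite_measure Q" "sets P = sets (joint_space X)" "sets Q = sets (joint_space X)"
    using assms(1,2) by (auto simp: joint_dists_def prob_space_def)
  then obtain B y where B: "B \<in> sets (restrict_space borel X)"
    and neq: "measure P (B \<times> {y}) \<noteq> measure Q (B \<times> {y})"
    using joint_measure_eqI[of P X Q] assms(4) by blast
  define v where "v = (\<chi> y. measure P (B \<times> {y}))"
  define w where "w = (\<chi> y. measure Q (B \<times> {y}))"
  have "v $ y \<noteq> w $ y"
    using neq by (simp add: v_def w_def)
  then have "v v* T \<noteq> w v* T"
    using vector_matrix_mult_cancel[OF assms(3)] by blast
  then obtain j where "(v v* T) $ j \<noteq> (w v* T) $ j"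
    by (auto simp: vec_eq_iff)
  then have "noisy_mass T P B j \<noteq> noisy_mass T Q B j"
    by (simp add: noisy_mass_def v_def w_def vector_matrix_mult_def mult.commute)
  with B show thesis by (rule that)
qed

lemma has_bochner_integral_noisy_indicator:
  fixes T :: "real^'c^'c"
  assumes "finite_measure M" "sets M = sets (joint_space X)"
    and "B \<in> sets (restrict_space borel X)"
  shows "has_bochner_integral M (\<lambda>w. T $ snd w $ j * indicator B (fst w)) (noisy_mass T M B j)"
proof -
  have ind: "has_bochner_integral M (indicator (B \<times> {y})) (measure M (B \<times> {y}))" for y
    using rectangle_in_joint_space[OF assms(3)] assms(2)
    by (intro has_bochner_integral_real_indicator)
      (auto simp: finite_measure.emeasure_eq_measure[OF assms(1)])
  have eq: "(\<lambda>w. T $ snd w $ j * indicator B (fst w))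
      = (\<lambda>w. \<Sum>y\<in>UNIV. T $ y $ j * indicator (B \<times> {y}) w)"
    by (auto simp: indicator_def if_distrib cong: if_cong)
  show ?thesis
    unfolding noisy_mass_def eq by (intro has_bochner_integral_sum has_bochner_integral_mult_right ind)
qed

lemma neg_noisy_log_nonneg:
  fixes T :: "real^'c^'c"
  assumes "stochastic_matrix T" "\<And>j. 0 < d j" "\<And>j. d j \<le> 1"
  shows "0 \<le> - (\<Sum>j\<in>UNIV. T $ y $ j * ln (d j))"
  using assms by (auto simp: stochastic_matrix_def intro!: sum_nonpos mult_nonneg_nonpos)

lemma neg_noisy_log_add_ge:
  fixes T :: "real^'c^'c"
  assumes T: "stochastic_matrix T" and d: "\<And>j. 0 < d j" "\<And>j. d j < 1"
  shows "2 * ln 2 \<le> - (\<Sum>j\<in>UNIV. T $ y $ j * ln (d j)) + - (\<Sum>j\<in>UNIV. T $ y $ j * ln (1 - d j))"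
proof -
  have "2 * ln 2 = (\<Sum>j\<in>UNIV. T $ y $ j * (2 * ln 2))"
    using T by (simp add: stochastic_matrix_def flip: sum_distrib_right)
  also have "\<dots> \<le> (\<Sum>j\<in>UNIV. T $ y $ j * (- ln (d j) - ln (1 - d j)))"
  proof (intro sum_mono mult_left_mono)
    show "2 * ln 2 \<le> - ln (d j) - ln (1 - d j)" for j
      using ln_add_ln_one_minus_le[OF d(1,2)[of j]] by linarith
  qed (use T in \<open>auto simp: stochastic_matrix_def\<close>)
  also have "\<dots> = - (\<Sum>j\<in>UNIV. T $ y $ j * ln (d j)) + - (\<Sum>j\<in>UNIV. T $ y $ j * ln (1 - d j))"
    by (simp add: sum_negf[symmetric] sum.distrib[symmetric] algebra_simps)
  finally show ?thesis .
qed

lemma L_dist_const_half: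
  fixes T :: "real^'c^'c"
  assumes "prob_space P" "prob_space Q" "stochastic_matrix T"
  shows "L_dist T P Q (\<lambda>_. 1 / 2) = ereal (- (2 * ln 2))"
proof -
  have "- (\<Sum>j\<in>UNIV. T $ i $ j * ln (1 / 2)) = ln 2" for i
    using assms(3) by (simp add: stochastic_matrix_def ln_div sum_negf flip: sum_distrib_right)
  then show ?thesis
    using prob_space.emeasure_space_1[OF assms(1)] prob_space.emeasure_space_1[OF assms(2)]
    by (simp add: L_dist_def real_term_def fake_term_dist_def)
qed

lemma L_dist_self_le:
  fixes T :: "real^'c^'c"
  assumes P: "P \<in> joint_dists X" and T: "stochastic_matrix T" and D: "D \<in> discs X"
  shows "L_dist T P P D \<le> ereal (- (2 * ln 2))"
proof -
  have Dm: "D \<in> borel_measurable (joint_space X)"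
    and D01: "\<And>x j. x \<in> X \<Longrightarrow> 0 < D (x, j) \<and> D (x, j) < 1"
    using D by (auto simp: discs_def space_joint_space)
  have sets_P: "sets P = sets (joint_space X)" and P1: "emeasure P (space P) = 1"
    using P by (auto simp: joint_dists_def prob_space.emeasure_space_1)
  have space_P: "space P = X \<times> UNIV"
    using sets_eq_imp_space_eq[OF sets_P] by (simp add: space_joint_space)
  define a where "a w = - (\<Sum>j\<in>UNIV. T $ snd w $ j * ln (D (fst w, j)))" for w
  define b where "b w = - (\<Sum>j\<in>UNIV. T $ snd w $ j * ln (1 - D (fst w, j)))" for w
  have a_meas: "(\<lambda>w. ennreal (a w)) \<in> borel_measurable P"
    unfolding a_def by (rule noisy_integrand_measurable[OF Dm sets_P]) measurable
  have b_meas: "(\<lambda>w. ennreal (b w)) \<in> borel_measurable P"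
    unfolding b_def by (rule noisy_integrand_measurable[OF Dm sets_P, of "\<lambda>d. ln (1 - d)"]) measurable
  have "ennreal (2 * ln 2) \<le> ennreal (a w) + ennreal (b w)" if "w \<in> space P" for w
  proof -
    have d: "\<And>j. 0 < D (fst w, j)" "\<And>j. D (fst w, j) < 1"
      using that D01 space_P by auto
    have "0 \<le> a w"
      unfolding a_def by (rule neg_noisy_log_nonneg[OF T]) (use d in \<open>auto intro: less_imp_le\<close>)
    moreover have "0 \<le> b w"
      unfolding b_def by (rule neg_noisy_log_nonneg[OF T]) (use d in \<open>auto intro: less_imp_le\<close>)
    moreover have "2 * ln 2 \<le> a w + b w"
      unfolding a_def b_def by (rule neg_noisy_log_add_ge[OF T d])
    ultimately show ?thesis
      by (simp flip: ennreal_plus)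
  qed
  then have "(\<integral>\<^sup>+ w. ennreal (2 * ln 2) \<partial>P)
      \<le> (\<integral>\<^sup>+ w. ennreal (a w) + ennreal (b w) \<partial>P)"
    by (intro nn_integral_mono) auto
  then have "ennreal (2 * ln 2)
      \<le> (\<integral>\<^sup>+ w. ennreal (a w) \<partial>P) + (\<integral>\<^sup>+ w. ennreal (b w) \<partial>P)"
    using P1 by (simp add: nn_integral_add[OF a_meas b_meas])
  then have "ereal (2 * ln 2)
      \<le> enn2ereal (\<integral>\<^sup>+ w. ennreal (a w) \<partial>P) + enn2ereal (\<integral>\<^sup>+ w. ennreal (b w) \<partial>P)"
    by (simp add: less_eq_ennreal.rep_eq plus_ennreal.rep_eq)
  then show ?thesis
    unfolding L_dist_def real_term_def fake_term_dist_def a_def[symmetric] b_def[symmetric]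
    by (cases "enn2ereal (\<integral>\<^sup>+ w. ennreal (a w) \<partial>P)";
        cases "enn2ereal (\<integral>\<^sup>+ w. ennreal (b w) \<partial>P)") auto
qed

lemma tilt_disc_in_discs:
  assumes "B \<in> sets (restrict_space borel X)" "-1 < s" "s < 1"
  shows "tilt_disc B j s \<in> discs X"
proof -
  have "tilt_disc B j s \<in> borel_measurable (joint_space X)"
    unfolding tilt_disc_def using rectangle_in_joint_space[OF assms(1)] by measurable
  then show ?thesis
    using assms(2,3) by (auto simp: discs_def tilt_disc_def indicator_def)
qed

lemma one_minus_tilt_disc: "1 - tilt_disc B j s w = tilt_disc B j (- s) w"
  by (simp add: tilt_disc_def field_simps)

lemma neg_noisy_log_tilt_disc:
  fixes T :: "real^'c^'c"
  assumes "stochastic_matrix T" "-1 < s"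
  shows "- (\<Sum>i\<in>UNIV. T $ y $ i * ln (tilt_disc B j s (x, i)))
    = ln 2 - ln (1 + s) * (T $ y $ j * indicator B x)"
proof -
  have "ln (tilt_disc B j s (x, i)) = ln (1 + s) * (if i = j then indicator B x else 0) - ln 2" for i
    using assms(2) by (auto simp: tilt_disc_def indicator_def ln_div)
  then have "(\<Sum>i\<in>UNIV. T $ y $ i * ln (tilt_disc B j s (x, i)))
      = (\<Sum>i\<in>UNIV. T $ y $ i * (ln (1 + s) * (if i = j then indicator B x else 0) - ln 2))"
    by simp
  also have "\<dots> = ln (1 + s) * (\<Sum>i\<in>UNIV. T $ y $ i * (if i = j then indicator B x else 0))
      - ln 2 * (\<Sum>i\<in>UNIV. T $ y $ i)"
    by (simp add: algebra_simps sum_subtractf sum_distrib_left)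
  also have "\<dots> = ln (1 + s) * (T $ y $ j * indicator B x) - ln 2"
    using assms(1) by (simp add: stochastic_matrix_def if_distrib cong: if_cong)
  finally show ?thesis by simp
qed

lemma nn_integral_neg_noisy_log_tilt_disc:
  fixes T :: "real^'c^'c"
  assumes M: "M \<in> joint_dists X" and T: "stochastic_matrix T"
    and B: "B \<in> sets (restrict_space borel X)" and s: "-1 < s" "s < 1"
  shows "enn2ereal (\<integral>\<^sup>+ w. ennreal (- (\<Sum>i\<in>UNIV. T $ snd w $ i * ln (tilt_disc B j s (fst w, i))))
    \<partial>M) = ereal (ln 2 - ln (1 + s) * noisy_mass T M B j)"
proof -
  interpret prob_space M using M by (simp add: joint_dists_def)
  have sets_M: "sets M = sets (joint_space X)" using M by (simp add: joint_dists_def)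
  define g where "g w = T $ snd w $ j * indicator B (fst w)" for w
  have g: "has_bochner_integral M g (noisy_mass T M B j)"
    unfolding g_def by (rule has_bochner_integral_noisy_indicator[OF finite_measure_axioms sets_M B])
  have f: "has_bochner_integral M (\<lambda>w. ln 2 - ln (1 + s) * g w)
      (ln 2 - ln (1 + s) * noisy_mass T M B j)"
  proof (rule has_bochner_integral_diff)
    show "has_bochner_integral M (\<lambda>w. ln 2) (ln 2)"
      by (simp add: has_bochner_integral_iff prob_space)
  qed (rule has_bochner_integral_mult_right[OF g])
  have g_bound: "ln (1 + s) * g w \<le> ln 2" for w
  proof -
    have g01: "0 \<le> g w" "g w \<le> 1"
      using T by (auto simp: g_def stochastic_matrix_def indicator_def)
    show ?thesis
    proof (cases "0 \<le> ln (1 + s)")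
      case True
      then have "ln (1 + s) * g w \<le> ln (1 + s)" using g01 by (simp add: mult_left_le)
      moreover have "ln (1 + s) \<le> ln 2" using s by simp
      ultimately show ?thesis by linarith
    next
      case False
      then have "ln (1 + s) * g w \<le> 0" using g01 by (simp add: mult_nonpos_nonneg)
      then show ?thesis using ln_gt_zero[of 2] by linarith
    qed
  qed
  have f_int: "integrable M (\<lambda>w. ln 2 - ln (1 + s) * g w)"
    and f_eq: "integral\<^sup>L M (\<lambda>w. ln 2 - ln (1 + s) * g w) = ln 2 - ln (1 + s) * noisy_mass T M B j"
    using f by (simp_all add: has_bochner_integral_iff)
  have f_nonneg: "0 \<le> ln 2 - ln (1 + s) * g w" for w
    using g_bound[of w] by simp
  have "(\<integral>\<^sup>+ w. ennreal (ln 2 - ln (1 + s) * g w) \<partial>M) = ennreal (ln 2 - ln (1 + s) * noisy_mass T M B j)"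
    using nn_integral_eq_integral[OF f_int] f_nonneg by (simp add: f_eq)
  moreover have "0 \<le> ln 2 - ln (1 + s) * noisy_mass T M B j"
    using Bochner_Integration.integral_nonneg[of M "\<lambda>w. ln 2 - ln (1 + s) * g w"] f_nonneg by (simp add: f_eq)
  moreover have "- (\<Sum>i\<in>UNIV. T $ snd w $ i * ln (tilt_disc B j s (fst w, i))) = ln 2 - ln (1 + s) * g w" for w
    unfolding g_def by (rule neg_noisy_log_tilt_disc[OF T s(1)])
  ultimately show ?thesis
    by simp
qed

lemma noisy_mass_nonneg: "stochastic_matrix T \<Longrightarrow> 0 \<le> noisy_mass T M B j"
  by (auto simp: noisy_mass_def stochastic_matrix_def intro!: sum_nonneg)

lemma L_dist_tilt_disc:
  fixes T :: "real^'c^'c"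
  assumes P: "P \<in> joint_dists X" and Q: "Q \<in> joint_dists X" and T: "stochastic_matrix T"
    and B: "B \<in> sets (restrict_space borel X)" and s: "-1 < s" "s < 1"
  shows "L_dist T P Q (tilt_disc B j s)
    = ereal (- (2 * ln 2) + (ln (1 + s) * noisy_mass T P B j + ln (1 - s) * noisy_mass T Q B j))"
proof -
  have "real_term T P (tilt_disc B j s) = - ereal (ln 2 - ln (1 + s) * noisy_mass T P B j)"
    unfolding real_term_def using nn_integral_neg_noisy_log_tilt_disc[OF P T B s] by simp
  moreover have "fake_term_dist T Q (tilt_disc B j s) = - ereal (ln 2 - ln (1 - s) * noisy_mass T Q B j)"
    unfolding fake_term_dist_def one_minus_tilt_disc
    using nn_integral_neg_noisy_log_tilt_disc[OF Q T B, of "- s"] s by simp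
  ultimately show ?thesis
    by (simp add: L_dist_def)
qed

lemma dist_value_ge:
  fixes T :: "real^'c^'c"
  assumes "prob_space P" "prob_space Q" "stochastic_matrix T"
  shows "ereal (- (2 * ln 2)) \<le> dist_value X T P Q"
  unfolding dist_value_def
  by (rule SUP_upper2[of "\<lambda>_. 1 / 2"]) (simp_all add: discs_def L_dist_const_half[OF assms])

lemma dist_value_self:
  fixes T :: "real^'c^'c"
  assumes "P \<in> joint_dists X" "stochastic_matrix T"
  shows "dist_value X T P P = ereal (- (2 * ln 2))"
proof (rule antisym)
  show "dist_value X T P P \<le> ereal (- (2 * ln 2))"
    unfolding dist_value_def by (intro SUP_least L_dist_self_le[OF assms])
  show "ereal (- (2 * ln 2)) \<le> dist_value X T P P"
    using assms by (intro dist_value_ge) (auto simp: joint_dists_def)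
qed

lemma dist_value_gt:
  fixes T :: "real^'c^'c"
  assumes P: "P \<in> joint_dists X" and Q: "Q \<in> joint_dists X" and T: "stochastic_matrix T"
    and "invertible T" "P \<noteq> Q"
  shows "ereal (- (2 * ln 2)) < dist_value X T P Q"
proof -
  obtain B j where B: "B \<in> sets (restrict_space borel X)"
    and neq: "noisy_mass T P B j \<noteq> noisy_mass T Q B j"
    using noisy_mass_separates[OF P Q assms(4,5)] by blast
  obtain s where s: "-1 < s" "s < 1"
    and gain: "0 < ln (1 + s) * noisy_mass T P B j + ln (1 - s) * noisy_mass T Q B j"
    using exists_ln_one_plus_one_minus_pos[OF noisy_mass_nonneg[OF T] noisy_mass_nonneg[OF T] neq] by blast
  have "ereal (- (2 * ln 2)) < L_dist T P Q (tilt_disc B j s)"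
    using gain by (simp add: L_dist_tilt_disc[OF P Q T B s])
  also have "\<dots> \<le> dist_value X T P Q"
    unfolding dist_value_def by (rule SUP_upper[OF tilt_disc_in_discs[OF B s]])
  finally show ?thesis .
qed

lemma dist_value_minimal_iff:
  fixes T :: "real^'c^'c"
  assumes P: "P \<in> joint_dists X" and Q: "Q \<in> joint_dists X" and T: "stochastic_matrix T"
    and "invertible T"
  shows "(\<forall>Q'\<in>joint_dists X. dist_value X T P Q \<le> dist_value X T P Q') \<longleftrightarrow> Q = P"
proof
  assume "\<forall>Q'\<in>joint_dists X. dist_value X T P Q \<le> dist_value X T P Q'"
  then have "dist_value X T P Q \<le> ereal (- (2 * ln 2))"
    using P dist_value_self[OF P T] by metis
  then show "Q = P"
    using dist_value_gt[OF P Q T assms(4)] by (metis not_le)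
next
  assume "Q = P"
  then show "\<forall>Q'\<in>joint_dists X. dist_value X T P Q \<le> dist_value X T P Q'"
    using dist_value_self[OF P T] dist_value_ge[of P _ T] P T by (auto simp: joint_dists_def)
qed

lemma gen_map_measurable:
  assumes "(\<lambda>(z, y). G z y) \<in> Z \<Otimes>\<^sub>M count_space UNIV \<rightarrow>\<^sub>M restrict_space borel X"
  shows "(\<lambda>(z, y). (G z y, y)) \<in> Z \<Otimes>\<^sub>M measure_pmf py \<rightarrow>\<^sub>M joint_space X"
proof -
  have sets_eq: "sets (Z \<Otimes>\<^sub>M measure_pmf py) = sets (Z \<Otimes>\<^sub>M count_space UNIV)"
    by (rule sets_pair_measure_cong[OF refl sets_measure_pmf_count_space])
  have "(\<lambda>u. (G (fst u) (snd u), snd u)) \<in> Z \<Otimes>\<^sub>M count_space UNIV \<rightarrow>\<^sub>M joint_space X"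
    using assms unfolding joint_space_def by (auto intro!: measurable_Pair simp: case_prod_beta')
  then show ?thesis
    unfolding measurable_cong_sets[OF sets_eq refl] by (simp add: case_prod_beta')
qed

lemma gen_dist_in_joint_dists:
  assumes "prob_space Z"
    and "(\<lambda>(z, y). G z y) \<in> Z \<Otimes>\<^sub>M count_space UNIV \<rightarrow>\<^sub>M restrict_space borel X"
  shows "gen_dist X Z py G \<in> joint_dists X"
proof -
  have "prob_space (Z \<Otimes>\<^sub>M measure_pmf py)"
    using assms(1) by (intro prob_space_pair) (auto simp: prob_space_measure_pmf)
  from prob_space.prob_space_distr[OF this gen_map_measurable[OF assms(2)]]
  show ?thesis
    unfolding joint_dists_def gen_dist_def by simp
qed

lemma fake_term_gen_eq_fake_term_dist:
  fixes T :: "real^'c^'c"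
  assumes "(\<lambda>(z, y). G z y) \<in> Z \<Otimes>\<^sub>M count_space UNIV \<rightarrow>\<^sub>M restrict_space borel X"
    and "D \<in> discs X"
  shows "fake_term_gen T Z py G D = fake_term_dist T (gen_dist X Z py G) D"
proof -
  have "D \<in> borel_measurable (joint_space X)"
    using assms(2) by (simp add: discs_def)
  moreover have "sets (gen_dist X Z py G) = sets (joint_space X)"
    by (simp add: gen_dist_def)
  ultimately have integrand: "(\<lambda>w. ennreal (- (\<Sum>j\<in>UNIV. T $ snd w $ j * ln (1 - D (fst w, j)))))
      \<in> borel_measurable (gen_dist X Z py G)"
    using noisy_integrand_measurable[of D X _ "\<lambda>d. ln (1 - d)" T] by simp
  show ?thesis
    using nn_integral_distr[OF gen_map_measurable[OF assms(1)] integrand[unfolded gen_dist_def]]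
    by (simp add: fake_term_gen_def fake_term_dist_def gen_dist_def case_prod_beta')
qed

lemma gen_value_eq_dist_value:
  fixes T :: "real^'c^'c"
  assumes "(\<lambda>(z, y). G z y) \<in> Z \<Otimes>\<^sub>M count_space UNIV \<rightarrow>\<^sub>M restrict_space borel X"
  shows "gen_value X T P Z py G = dist_value X T P (gen_dist X Z py G)"
  unfolding gen_value_def dist_value_def L_rcGAN_def L_dist_def
  using fake_term_gen_eq_fake_term_dist[OF assms] by (intro SUP_cong) auto

theorem theorem2:
  fixes X :: "(real^'d) set" and T :: "real^'c^'c" and P :: "((real^'d) \<times> 'c) measure"
    and Z :: "'z measure" and py :: "'c pmf" and G :: "'z \<Rightarrow> 'c \<Rightarrow> real^'d"
  assumes "prob_space P" and "sets P = sets (joint_space X)"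
    and "\<forall>i j. 0 \<le> T $ i $ j \<and> T $ i $ j \<le> 1"
    and "\<forall>i. (\<Sum>j\<in>UNIV. T $ i $ j) = 1"
    and "invertible T"
    and "prob_space Z"
    and "(\<lambda>(z, y). G z y) \<in> Z \<Otimes>\<^sub>M count_space UNIV \<rightarrow>\<^sub>M restrict_space borel X"
  shows "rcgan_optimal X T P Z py G \<longleftrightarrow> gen_dist X Z py G = P"
proof -
  have P: "P \<in> joint_dists X"
    using assms(1,2) by (simp add: joint_dists_def)
  have T: "stochastic_matrix T"
    using assms(3,4) by (simp add: stochastic_matrix_def)
  have "rcgan_optimal X T P Z py G
      \<longleftrightarrow> (\<forall>Q\<in>joint_dists X. dist_value X T P (gen_dist X Z py G) \<le> dist_value X T P Q)"
    unfolding rcgan_optimal_def gen_value_eq_dist_value[OF assms(7)] ..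
  also have "\<dots> \<longleftrightarrow> gen_dist X Z py G = P"
    by (rule dist_value_minimal_iff[OF P gen_dist_in_joint_dists[OF assms(6,7)] T assms(5)])
  finally show ?thesis .
qed

end
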